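(* Let $n\ge0$ and $k\ge1$. For every formula $\alpha$: if $\vDash_{\mathcal{R}_n^k}\alpha$ then $\vdash_{L_n^k}\alpha$.
   Context: Formulas are built from a countable set of propositional variables using unary $\neg,\circ$ and binary $\land,\lor,\to$; $\circ^0\alpha=\alpha$, $\circ^{m+1}\alpha=\circ(\circ^m\alpha)$, $\alpha\leftrightarrow\beta:=(\alpha\to\beta)\land(\beta\to\alpha)$. mbC is the Hilbert calculus with the axiom schemas of a standard axiomatization of positive classical propositional logic in $\land,\lor,\to$, plus (TND) $\alpha\lor\neg\alpha$ and (bc1) $\circ\alpha\to(\alpha\to(\neg\alpha\to\beta))$, modus ponens being the only rule; mbCciw is mbC plus (ciw) $\circ\alpha\lor(\alpha\land\neg\alpha)$. For $n\ge0$, $k\ge1$, $L_n^k$ is mbCciw plus (cc$^n$) $\circ^{n+2}\alpha$, (dn) $\neg\neg\alpha\leftrightarrow\alpha$, and (ip$^j$) $\neg\circ^j\neg\alpha\leftrightarrow\neg\circ^j\alpha$ for each $1\le j<k$. $\mathcal{M}_1$ is the three-valued Nmatrix with values $T,t,F$, designated set $D=\{T,t\}$, and: $\neg T=\{F\}$, $\neg t=\{t\}$, $\neg F=\{T\}$; $\circ T=\circ F=\{T,t\}$, $\circ t=\{F\}$; $x\land y=\{T,t\}$ if $x,y\in D$ else $\{F\}$; $x\lor y=\{T,t\}$ if $x\in D$ or $y\in D$ else $\{F\}$; $x\to y=\{T,t\}$ if $x\notin D$ or $y\in D$ else $\{F\}$. A valuation over $\mathcal{M}_1$ is a map $\vartheta$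 from formulas to $\{T,t,F\}$ respecting these multioperations. $\mathcal{F}_n^k$ is the set of valuations $\vartheta$ over $\mathcal{M}_1$ such that for every formula $\alpha$: (vCc$^n$) if $\vartheta(\circ^n\alpha)\in\{T,F\}$ then $\vartheta(\circ^{n+1}\alpha)=T$; and (vip$^j$) $\vartheta(\circ^j\alpha)=\vartheta(\circ^j\neg\alpha)$ for each $1\le j\le k-1$. $\mathcal{R}_n^k=\langle\mathcal{M}_1,\mathcal{F}_n^k\rangle$, and $\vDash_{\mathcal{R}_n^k}\alpha$ means $\vartheta(\alpha)\in D$ for all $\vartheta\in\mathcal{F}_n^k$. *)

theory Defs
  imports Main
begin

datatype fm = Var nat | Neg fm | Circ fm | And fm fm | Or fm fm | Imp fm fm

definition Iff :: "fm \<Rightarrow> fm \<Rightarrow> fm" where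
  "Iff a b = And (Imp a b) (Imp b a)"

abbreviation circs :: "nat \<Rightarrow> fm \<Rightarrow> fm" where
  "circs m a \<equiv> (Circ ^^ m) a"

inductive Lnk :: "nat \<Rightarrow> nat \<Rightarrow> fm \<Rightarrow> bool" for n k :: nat where
  Ax1: "Lnk n k (Imp a (Imp b a))"
| Ax2: "Lnk n k (Imp (Imp a b) (Imp (Imp a (Imp b c)) (Imp a c)))"
| Ax3: "Lnk n k (Imp a (Imp b (And a b)))"
| Ax4: "Lnk n k (Imp (And a b) a)"
| Ax5: "Lnk n k (Imp (And a b) b)"
| Ax6: "Lnk n k (Imp a (Or a b))"
| Ax7: "Lnk n k (Imp b (Or a b))"
| Ax8: "Lnk n k (Imp (Imp a c) (Imp (Imp b c) (Imp (Or a b) c)))"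
| Ax9: "Lnk n k (Or a (Imp a b))"
| TND: "Lnk n k (Or a (Neg a))"
| bc1: "Lnk n k (Imp (Circ a) (Imp a (Imp (Neg a) b)))"
| ciw: "Lnk n k (Or (Circ a) (And a (Neg a)))"
| cc: "Lnk n k (circs (n + 2) a)"
| dn: "Lnk n k (Iff (Neg (Neg a)) a)"
| ip: "1 \<le> j \<Longrightarrow> j < k \<Longrightarrow> Lnk n k (Iff (Neg (circs j (Neg a))) (Neg (circs j a)))"
| MP: "Lnk n k a \<Longrightarrow> Lnk n k (Imp a b) \<Longrightarrow> Lnk n k b"

datatype tv = TT | tt | FF

definition designated :: "tv set" where "designated = {TT, tt}"

fun negM :: "tv \<Rightarrow> tv set" where
  "negM TT = {FF}" | "negM tt = {tt}" | "negM FF = {TT}"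

fun circM :: "tv \<Rightarrow> tv set" where
  "circM TT = {TT, tt}" | "circM tt = {FF}" | "circM FF = {TT, tt}"

definition andM :: "tv \<Rightarrow> tv \<Rightarrow> tv set" where
  "andM x y = (if x \<in> designated \<and> y \<in> designated then {TT, tt} else {FF})"

definition orM :: "tv \<Rightarrow> tv \<Rightarrow> tv set" where
  "orM x y = (if x \<in> designated \<or> y \<in> designated then {TT, tt} else {FF})"

definition impM :: "tv \<Rightarrow> tv \<Rightarrow> tv set" where
  "impM x y = (if x \<notin> designated \<or> y \<in> designated then {TT, tt} else {FF})"

definition valuation :: "(fm \<Rightarrow> tv) \<Rightarrow> bool" where
  "valuation v \<longleftrightarrow>
     (\<forall>a. v (Neg a) \<in> negM (v a)) \<and>
     (\<forall>a. v (Circ a) \<in> circM (v a)) \<and>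
     (\<forall>a b. v (And a b) \<in> andM (v a) (v b)) \<and>
     (\<forall>a b. v (Or a b) \<in> orM (v a) (v b)) \<and>
     (\<forall>a b. v (Imp a b) \<in> impM (v a) (v b))"

definition Fnk :: "nat \<Rightarrow> nat \<Rightarrow> (fm \<Rightarrow> tv) set" where
  "Fnk n k = {v. valuation v \<and>
     (\<forall>a. v (circs n a) \<in> {TT, FF} \<longrightarrow> v (circs (n + 1) a) = TT) \<and>
     (\<forall>a j. 1 \<le> j \<and> j \<le> k - 1 \<longrightarrow> v (circs j a) = v (circs j (Neg a)))}"

definition valid_Rnk :: "nat \<Rightarrow> nat \<Rightarrow> fm \<Rightarrow> bool" where
  "valid_Rnk n k a \<longleftrightarrow> (\<forall>v \<in> Fnk n k. v a \<in> designated)"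

end

theory Submission
  imports Defs
begin

text \<open>If \<alpha> is not a theorem, compactness of derivability and Zorn's lemma give a
  maximal set D of formulas from which \<alpha> is not derivable. By the deduction theorem,
  the positive axioms and TND, D is a prime theory containing b or \<not>b for every b.
  Value b as FF if b \<notin> D, as tt if both b and \<not>b lie in D, and as TT otherwise.
  By bc1 and ciw, \<circ>b \<in> D exactly when b is not valued tt; this makes the map a
  valuation over M_1, and then cc^n and ip^j yield (vCc^n) and (vip^j). As \<alpha> \<notin> D,
  this valuation refutes \<alpha>.\<close>

inductive Lnk_from :: "nat \<Rightarrow> nat \<Rightarrow> fm set \<Rightarrow> fm \<Rightarrow> bool" for n k :: nat where
  hyp: "a \<in> G \<Longrightarrow> Lnk_from n k G a"
| ax: "Lnk n k a \<Longrightarrow> Lnk_from n k G a"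
| MP: "Lnk_from n k G a \<Longrightarrow> Lnk_from n k G (Imp a b) \<Longrightarrow> Lnk_from n k G b"

lemma Lnk_from_empty: "Lnk_from n k {} a \<Longrightarrow> Lnk n k a"
proof (induction "{} :: fm set" a rule: Lnk_from.induct)
  case (MP a b)
  then show ?case by (blast intro: Lnk.MP)
qed auto

lemma Lnk_from_mono: "Lnk_from n k G a \<Longrightarrow> G \<subseteq> H \<Longrightarrow> Lnk_from n k H a"
  by (induction rule: Lnk_from.induct) (auto intro: Lnk_from.intros)

lemma Lnk_from_finite_subset:
  "Lnk_from n k G a \<Longrightarrow> \<exists>F. finite F \<and> F \<subseteq> G \<and> Lnk_from n k F a"
proof (induction rule: Lnk_from.induct)
  case (hyp a G)
  then show ?case by (intro exI[of _ "{a}"]) (auto intro: Lnk_from.hyp)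
next
  case (ax a G)
  then show ?case by (intro exI[of _ "{}"]) (auto intro: Lnk_from.ax)
next
  case (MP G a b)
  then obtain F1 F2 where "finite F1" "F1 \<subseteq> G" "Lnk_from n k F1 a"
    and "finite F2" "F2 \<subseteq> G" "Lnk_from n k F2 (Imp a b)"
    by blast
  then show ?case
    by (intro exI[of _ "F1 \<union> F2"]) (auto intro: Lnk_from.MP Lnk_from_mono)
qed

lemma Lnk_imp_refl: "Lnk n k (Imp a a)"
  using Lnk.MP[OF Lnk.Ax1 Lnk.MP[OF Lnk.Ax1 Lnk.Ax2]] .

lemma Lnk_from_deduction: "Lnk_from n k (insert b G) c \<Longrightarrow> Lnk_from n k G (Imp b c)"
proof (induction "insert b G" c rule: Lnk_from.induct)
  case (hyp a)
  then consider "a = b" | "a \<in> G" by blast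
  then show ?case
  proof cases
    case 1
    then show ?thesis by (simp add: Lnk_from.ax Lnk_imp_refl)
  next
    case 2
    then show ?thesis by (meson Lnk_from.hyp Lnk_from.ax Lnk_from.MP Lnk.Ax1)
  qed
next
  case (ax a)
  then show ?case by (meson Lnk_from.ax Lnk_from.MP Lnk.Ax1)
next
  case (MP a c)
  then show ?case by (meson Lnk_from.ax Lnk_from.MP Lnk.Ax2)
qed

lemma Lnk_from_Union_chain:
  assumes "subset.chain {G. \<not> Lnk_from n k G \<alpha>} C" and "C \<noteq> {}"
  shows "\<not> Lnk_from n k (\<Union>C) \<alpha>"
proof
  assume "Lnk_from n k (\<Union>C) \<alpha>"
  from Lnk_from_finite_subset[OF this]
  obtain F where F: "finite F" "F \<subseteq> \<Union>C" "Lnk_from n k F \<alpha>"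
    by blast
  obtain B where "B \<in> C" "F \<subseteq> B"
    using finite_subset_Union_chain[OF F(1,2) assms(2,1)] .
  moreover have "C \<subseteq> {G. \<not> Lnk_from n k G \<alpha>}"
    using assms(1) by (simp add: subset.chain_def)
  ultimately show False
    using Lnk_from_mono[OF F(3)] by blast
qed

locale Lnk_maximal_nonderiving =
  fixes n k :: nat and \<alpha> :: fm and D :: "fm set"
  assumes nonderiving: "\<not> Lnk_from n k D \<alpha>"
    and maximal: "\<And>X. \<not> Lnk_from n k X \<alpha> \<Longrightarrow> D \<subseteq> X \<Longrightarrow> X = D"

lemma Lindenbaum:
  assumes "\<not> Lnk n k \<alpha>"
  obtains D where "Lnk_maximal_nonderiving n k \<alpha> D"
proof -
  let ?nonderiving = "{G. \<not> Lnk_from n k G \<alpha>}"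
  have "\<exists>D \<in> ?nonderiving. \<forall>X \<in> ?nonderiving. D \<subseteq> X \<longrightarrow> X = D"
  proof (rule subset_Zorn_nonempty)
    show "?nonderiving \<noteq> {}"
      using assms Lnk_from_empty by auto
    show "\<Union>C \<in> ?nonderiving" if "C \<noteq> {}" and "subset.chain ?nonderiving C" for C
      using Lnk_from_Union_chain[OF that(2,1)] by simp
  qed
  then show thesis
    using that by (auto simp add: Lnk_maximal_nonderiving_def)
qed

context Lnk_maximal_nonderiving
begin

lemma not_mem_imp_derivable:
  assumes "b \<notin> D"
  shows "Lnk_from n k D (Imp b \<alpha>)"
proof (rule Lnk_from_deduction)
  show "Lnk_from n k (insert b D) \<alpha>"
    using maximal[of "insert b D"] assms by auto
qed

lemma derivable_mem:
  assumes "Lnk_from n k D b"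
  shows "b \<in> D"
proof (rule ccontr)
  assume "b \<notin> D"
  then have "Lnk_from n k D \<alpha>"
    using Lnk_from.MP[OF assms not_mem_imp_derivable] by blast
  with nonderiving show False ..
qed

lemma theorem_mem: "Lnk n k b \<Longrightarrow> b \<in> D"
  by (rule derivable_mem, rule Lnk_from.ax)

lemma MP_mem: "a \<in> D \<Longrightarrow> Imp a b \<in> D \<Longrightarrow> b \<in> D"
  by (rule derivable_mem, rule Lnk_from.MP[OF Lnk_from.hyp Lnk_from.hyp])

lemma alpha_not_mem: "\<alpha> \<notin> D"
  using nonderiving Lnk_from.hyp by blast

lemma Or_mem: "Or a b \<in> D \<longleftrightarrow> a \<in> D \<or> b \<in> D"
proof
  assume ab: "Or a b \<in> D"
  show "a \<in> D \<or> b \<in> D"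
  proof (rule ccontr)
    assume "\<not> (a \<in> D \<or> b \<in> D)"
    then have "Lnk_from n k D (Imp a \<alpha>)" "Lnk_from n k D (Imp b \<alpha>)"
      using not_mem_imp_derivable by auto
    then have "Lnk_from n k D \<alpha>"
      using ab by (meson Lnk_from.hyp Lnk_from.ax Lnk_from.MP Lnk.Ax8)
    then show False using nonderiving by simp
  qed
next
  show "a \<in> D \<or> b \<in> D \<Longrightarrow> Or a b \<in> D"
    using MP_mem[OF _ theorem_mem[OF Lnk.Ax6[of n k a b]]]
      MP_mem[OF _ theorem_mem[OF Lnk.Ax7[of n k b a]]] by blast
qed

lemma And_mem: "And a b \<in> D \<longleftrightarrow> a \<in> D \<and> b \<in> D"
  using MP_mem[OF _ theorem_mem[OF Lnk.Ax4[of n k a b]]]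
    MP_mem[OF _ theorem_mem[OF Lnk.Ax5[of n k a b]]]
    MP_mem[OF _ MP_mem[OF _ theorem_mem[OF Lnk.Ax3[of n k a b]]]] by blast

lemma Imp_mem: "Imp a b \<in> D \<longleftrightarrow> a \<notin> D \<or> b \<in> D"
  using MP_mem[of a b] MP_mem[OF _ theorem_mem[OF Lnk.Ax1[of n k b a]]]
    Or_mem[of a "Imp a b"] theorem_mem[OF Lnk.Ax9[of n k a b]] by blast

lemma Iff_mem: "Iff a b \<in> D \<Longrightarrow> a \<in> D \<longleftrightarrow> b \<in> D"
  unfolding Iff_def using And_mem Imp_mem by blast

lemma Neg_mem_if_not_mem: "a \<notin> D \<Longrightarrow> Neg a \<in> D"
  using Or_mem theorem_mem[OF Lnk.TND[of n k a]] by blast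

lemma Neg_Neg_mem: "Neg (Neg a) \<in> D \<longleftrightarrow> a \<in> D"
  using Iff_mem theorem_mem[OF Lnk.dn[of n k a]] by blast

lemma Circ_mem: "Circ a \<in> D \<longleftrightarrow> \<not> (a \<in> D \<and> Neg a \<in> D)"
proof
  show "Circ a \<in> D \<Longrightarrow> \<not> (a \<in> D \<and> Neg a \<in> D)"
    using MP_mem[OF _ MP_mem[OF _ MP_mem[OF _ theorem_mem[OF Lnk.bc1[of n k a \<alpha>]]]]]
      alpha_not_mem by blast
  show "\<not> (a \<in> D \<and> Neg a \<in> D) \<Longrightarrow> Circ a \<in> D"
    using Or_mem And_mem theorem_mem[OF Lnk.ciw[of n k a]] by blast
qed

lemma circs_Neg_mem:
  assumes "1 \<le> j" "j < k"
  shows "circs j (Neg a) \<in> D \<longleftrightarrow> circs j a \<in> D"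
  using assms
proof (induction j rule: dec_induct)
  case base
  show ?case using Circ_mem Neg_Neg_mem by auto
next
  case (step j)
  then have "j < k" by simp
  then have "Neg (circs j (Neg a)) \<in> D \<longleftrightarrow> Neg (circs j a) \<in> D"
    using Iff_mem theorem_mem[OF Lnk.ip] step.hyps(1) by auto
  with step show ?case using Circ_mem by simp
qed

definition canonical_val :: "fm \<Rightarrow> tv" where
  "canonical_val b = (if b \<notin> D then FF else if Neg b \<in> D then tt else TT)"

lemma canonical_val_designated: "canonical_val b \<in> designated \<longleftrightarrow> b \<in> D"
  by (simp add: canonical_val_def designated_def)

lemma canonical_val_classical: "canonical_val b \<in> {TT, FF} \<longleftrightarrow> Circ b \<in> D"
  by (auto simp: canonical_val_def Circ_mem)

lemma canonical_val_valuation: "valuation canonical_val"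
  unfolding valuation_def
proof (intro conjI allI)
  fix a b
  show "canonical_val (Neg a) \<in> negM (canonical_val a)"
    using Neg_Neg_mem[of a] Neg_mem_if_not_mem[of a] by (auto simp: canonical_val_def)
  show "canonical_val (Circ a) \<in> circM (canonical_val a)"
    using Circ_mem[of a] by (auto simp: canonical_val_def)
  show "canonical_val (And a b) \<in> andM (canonical_val a) (canonical_val b)"
    using And_mem[of a b] by (auto simp: canonical_val_def andM_def designated_def)
  show "canonical_val (Or a b) \<in> orM (canonical_val a) (canonical_val b)"
    using Or_mem[of a b] by (auto simp: canonical_val_def orM_def designated_def)
  show "canonical_val (Imp a b) \<in> impM (canonical_val a) (canonical_val b)"
    using Imp_mem[of a b] by (auto simp: canonical_val_def impM_def designated_def)
qed

lemma canonical_val_Cc: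
  assumes "canonical_val (circs n a) \<in> {TT, FF}"
  shows "canonical_val (circs (n + 1) a) = TT"
proof -
  have "Circ (circs n a) \<in> D"
    using assms canonical_val_classical by blast
  moreover have "Circ (Circ (circs n a)) \<in> D"
    using theorem_mem[OF Lnk.cc[of n k a]] by (simp add: numeral_2_eq_2)
  ultimately show ?thesis
    using Circ_mem[of "Circ (circs n a)"] by (simp add: canonical_val_def)
qed

lemma canonical_val_ip:
  assumes "1 \<le> j" "j < k"
  shows "canonical_val (circs j a) = canonical_val (circs j (Neg a))"
  using circs_Neg_mem[OF assms, of a] Iff_mem[OF theorem_mem[OF Lnk.ip[OF assms, of n a]]]
  by (simp add: canonical_val_def)

lemma canonical_val_Fnk: "canonical_val \<in> Fnk n k"
  unfolding Fnk_def
proof (intro CollectI conjI allI impI canonical_val_valuation)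
  show "canonical_val (circs (n + 1) a) = TT" if "canonical_val (circs n a) \<in> {TT, FF}" for a
    using canonical_val_Cc[OF that] .
  show "canonical_val (circs j a) = canonical_val (circs j (Neg a))"
    if "1 \<le> j \<and> j \<le> k - 1" for a j
    using that by (intro canonical_val_ip) auto
qed

end

theorem theorem27:
  fixes n k :: nat and \<alpha> :: fm
  assumes "k \<ge> 1"
  shows "valid_Rnk n k \<alpha> \<Longrightarrow> Lnk n k \<alpha>"
proof (rule ccontr)
  assume valid: "valid_Rnk n k \<alpha>" and "\<not> Lnk n k \<alpha>"
  then obtain D where "Lnk_maximal_nonderiving n k \<alpha> D"
    using Lindenbaum by blast
  then interpret Lnk_maximal_nonderiving n k \<alpha> D .
  have "canonical_val \<alpha> \<in> designated"
    using valid canonical_val_Fnk by (simp add: valid_Rnk_def)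
  then show False
    using alpha_not_mem canonical_val_designated by blast
qed

end
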